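(* Let $A=(\Sigma,q,N,\delta)$ be a simple LQCA with $|N|=r\ge2$. Then every column $U_A(\cdot,c)$, $c\in\mathcal C_A$, has norm $1$ if and only if every $q$-cycle in the weighted de Bruijn graph $G_A$ has weight $1$.
   Context: A linear quantum cellular automaton (LQCA) is a tuple $A=(\Sigma,q,N,\delta)$ where $\Sigma$ is a finite nonempty set of states, $N=(a_1,\dots,a_r)$ is a strictly increasing sequence of integers, $\delta:\Sigma^r\to\mathbb C^\Sigma$ satisfies $\|\delta(w)\|>0$ for all $w$, and $q\in\Sigma$ satisfies $[\delta(q,\dots,q)](x)=1$ if $x=q$ and $0$ otherwise. It is simple if $a_r-a_1=r-1$. A configuration is a map $c:\mathbb Z\to\Sigma$ with $c_i\ne q$ for only finitely many $i$; $\mathcal C_A$ is the set of configurations. With $c_{i+N}=(c_{i+a_1},\dots,c_{i+a_r})$, $U_A(d,c)=\prod_{i\in\mathbb Z}[\delta(c_{i+N})](d_i)$, and $U_A(\cdot,c)$ is the column $d\mapsto U_A(d,c)$ with norm $\sqrt{\sum_d|U_A(d,c)|^2}$. The graph $G_A=(V,E,w)$ has vertex set $V=\Sigma^{r-1}$ (words of length $r-1$), edge set $E=\{(xz,zy):x,y\in\Sigma,z\in\Sigma^{r-2}\}$, and weight $w((xz,zy))=\|\delta(xzy)\|$. A path $(v_0,\dots,v_k)$ has weight $\prod_{i=0}^{k-1}w((v_i,v_{i+1}))$; it is a cycle if $k>0$ and $v_0=v_k$, and a $q$-cycle if moreover $v_0=q^{r-1}$. *)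

theory Defs
  imports "HOL-Analysis.Analysis"
begin

text \<open>The local rule delta is a function on words (only its values on words of
  length r matter); delta w is a vector in C^Sigma, i.e. a function 's => complex.\<close>

definition vnorm :: "('s::finite \<Rightarrow> complex) \<Rightarrow> real" where
  "vnorm f = sqrt (\<Sum>s\<in>UNIV. (cmod (f s))^2)"

definition is_lqca :: "'s::finite \<Rightarrow> int list \<Rightarrow> ('s list \<Rightarrow> 's \<Rightarrow> complex) \<Rightarrow> bool" where
  "is_lqca q N \<delta> \<longleftrightarrow>
     N \<noteq> [] \<and> sorted_wrt (<) N \<and>
     (\<forall>w. length w = length N \<longrightarrow> vnorm (\<delta> w) > 0) \<and>
     (\<forall>x. \<delta> (replicate (length N) q) x = (if x = q then 1 else 0))"

definition simple_lqca :: "int list \<Rightarrow> bool" where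
  "simple_lqca N \<longleftrightarrow> last N - hd N = int (length N) - 1"

definition configs :: "'s \<Rightarrow> (int \<Rightarrow> 's) set" where
  "configs q = {c. finite {i. c i \<noteq> q}}"

definition nbhd :: "(int \<Rightarrow> 's) \<Rightarrow> int list \<Rightarrow> int \<Rightarrow> 's list" where
  "nbhd c N i = map (\<lambda>a. c (i + a)) N"

text \<open>U_A(d,c) = prod over all i of delta(c_{i+N})(d_i). For configurations c, d all
  factors with c_{i+N} = q^r and d_i = q equal 1 and the remaining index set is
  finite, so the infinite product is this finite product.\<close>
definition Uop :: "'s \<Rightarrow> int list \<Rightarrow> ('s list \<Rightarrow> 's \<Rightarrow> complex) \<Rightarrow> (int \<Rightarrow> 's) \<Rightarrow> (int \<Rightarrow> 's) \<Rightarrow> complex" where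
  "Uop q N \<delta> d c =
     (\<Prod>i | nbhd c N i \<noteq> replicate (length N) q \<or> d i \<noteq> q. \<delta> (nbhd c N i) (d i))"

definition column_norm_one :: "'s \<Rightarrow> int list \<Rightarrow> ('s list \<Rightarrow> 's \<Rightarrow> complex) \<Rightarrow> (int \<Rightarrow> 's) \<Rightarrow> bool" where
  "column_norm_one q N \<delta> c \<longleftrightarrow>
     ((\<lambda>d. (cmod (Uop q N \<delta> d c))^2) has_sum 1) (configs q)"

definition gvert :: "nat \<Rightarrow> 's list \<Rightarrow> bool" where
  "gvert r v \<longleftrightarrow> length v = r - 1"

definition gedge :: "nat \<Rightarrow> 's list \<Rightarrow> 's list \<Rightarrow> bool" where
  "gedge r u v \<longleftrightarrow> (\<exists>x y z. length z = r - 2 \<and> u = x # z \<and> v = z @ [y])"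

text \<open>weight of edge (xz, zy) is ||delta(xzy)||, and xzy = hd u # v.\<close>
definition gweight :: "('s::finite list \<Rightarrow> 's \<Rightarrow> complex) \<Rightarrow> 's list \<Rightarrow> 's list \<Rightarrow> real" where
  "gweight \<delta> u v = vnorm (\<delta> (hd u # v))"

definition gpath :: "nat \<Rightarrow> 's list list \<Rightarrow> bool" where
  "gpath r vs \<longleftrightarrow> vs \<noteq> [] \<and> (\<forall>v\<in>set vs. gvert r v) \<and>
     (\<forall>j. Suc j < length vs \<longrightarrow> gedge r (vs ! j) (vs ! Suc j))"

definition path_weight :: "('s::finite list \<Rightarrow> 's \<Rightarrow> complex) \<Rightarrow> 's list list \<Rightarrow> real" where
  "path_weight \<delta> vs = (\<Prod>j<length vs - 1. gweight \<delta> (vs ! j) (vs ! Suc j))"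

definition q_cycle :: "'s \<Rightarrow> nat \<Rightarrow> 's list list \<Rightarrow> bool" where
  "q_cycle q r vs \<longleftrightarrow> gpath r vs \<and> length vs > 1 \<and>
     hd vs = last vs \<and> hd vs = replicate (r - 1) q"

end

(*
  Since delta(q^r) is the basis vector e_q, the entry U_A(d,c) vanishes unless d = q at every
  cell whose neighbourhood in c is quiescent. Summing |U_A(d,c)|^2 over the remaining finitely
  many free cells factorises, so the squared norm of the column of c is the product of
  ||delta(c_{i+N})||^2 over the non-quiescent neighbourhoods. For a simple neighbourhood,
  c_{i+N} is a window of r consecutive letters of c, and the consecutive windows of length r - 1
  form a path in G_A whose edge weights are exactly these factors. Running this path across the
  support of c gives a q-cycle; conversely, every q-cycle spells out a configuration in this way.
*)
theory Submission
  imports Defs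
begin

lemma vnorm_nonneg: "0 \<le> vnorm f"
  by (simp add: vnorm_def sum_nonneg)

lemma is_lqca_quiescent:
  "is_lqca q N \<delta> \<Longrightarrow> \<delta> (replicate (length N) q) = (\<lambda>x. if x = q then 1 else 0)"
  by (simp add: is_lqca_def fun_eq_iff)

lemma Uop_eq_prod_support:
  assumes dq: "\<delta> (replicate (length N) q) = (\<lambda>x. if x = q then 1 else 0)"
    and "finite S"
    and c_S: "\<And>i. i \<notin> S \<Longrightarrow> nbhd c N i = replicate (length N) q"
    and d_S: "\<And>i. i \<notin> S \<Longrightarrow> d i = q"
  shows "Uop q N \<delta> d c = (\<Prod>i\<in>S. \<delta> (nbhd c N i) (d i))"
  unfolding Uop_def
  by (rule prod.mono_neutral_left[OF \<open>finite S\<close>]) (use c_S d_S dq in auto)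

lemma Uop_eq_0:
  assumes dq: "\<delta> (replicate (length N) q) = (\<lambda>x. if x = q then 1 else 0)"
    and "finite S"
    and c_S: "\<And>i. i \<notin> S \<Longrightarrow> nbhd c N i = replicate (length N) q"
    and "d \<in> configs q" "i \<notin> S" "d i \<noteq> q"
  shows "Uop q N \<delta> d c = 0"
proof -
  have "{i. nbhd c N i \<noteq> replicate (length N) q \<or> d i \<noteq> q} \<subseteq> S \<union> {i. d i \<noteq> q}"
    using c_S by blast
  moreover have "finite {i. d i \<noteq> q}"
    using \<open>d \<in> configs q\<close> by (simp add: configs_def)
  ultimately have "finite {i. nbhd c N i \<noteq> replicate (length N) q \<or> d i \<noteq> q}"
    using \<open>finite S\<close> by (meson finite_UnI finite_subset)
  moreover have "\<delta> (nbhd c N i) (d i) = 0"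
    using c_S[OF \<open>i \<notin> S\<close>] dq \<open>d i \<noteq> q\<close> by simp
  ultimately show ?thesis
    unfolding Uop_def using \<open>d i \<noteq> q\<close> by (intro prod_zero) blast+
qed

lemma column_has_sum_prod_vnorm:
  fixes \<delta> :: "'s::finite list \<Rightarrow> 's \<Rightarrow> complex"
  assumes dq: "\<delta> (replicate (length N) q) = (\<lambda>x. if x = q then 1 else 0)"
    and "finite S"
    and c_S: "\<And>i. i \<notin> S \<Longrightarrow> nbhd c N i = replicate (length N) q"
  shows "((\<lambda>d. (cmod (Uop q N \<delta> d c))\<^sup>2) has_sum (\<Prod>i\<in>S. (vnorm (\<delta> (nbhd c N i)))\<^sup>2)) (configs q)"
proof -
  define D where "D = {d. \<forall>i. i \<notin> S \<longrightarrow> d i = q}"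
  have bij: "bij_betw (\<lambda>d. restrict d S) D (PiE S (\<lambda>_. UNIV))"
    by (rule bij_betwI[where g = "\<lambda>f i. if i \<in> S then f i else q"])
      (auto simp: D_def fun_eq_iff PiE_def extensional_def)
  have "(\<Sum>d\<in>D. (cmod (Uop q N \<delta> d c))\<^sup>2) = (\<Sum>d\<in>D. \<Prod>i\<in>S. (cmod (\<delta> (nbhd c N i) (restrict d S i)))\<^sup>2)"
    using Uop_eq_prod_support[of \<delta> N q S c] dq \<open>finite S\<close> c_S
    by (intro sum.cong) (auto simp: D_def prod_norm[symmetric] prod_power_distrib)
  also have "\<dots> = (\<Sum>f\<in>PiE S (\<lambda>_. UNIV). \<Prod>i\<in>S. (cmod (\<delta> (nbhd c N i) (f i)))\<^sup>2)"
    by (rule sum.reindex_bij_betw[OF bij])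
  also have "\<dots> = (\<Prod>i\<in>S. \<Sum>y\<in>UNIV. (cmod (\<delta> (nbhd c N i) y))\<^sup>2)"
    by (rule prod_sum_PiE[symmetric]) (simp_all add: \<open>finite S\<close>)
  also have "\<dots> = (\<Prod>i\<in>S. (vnorm (\<delta> (nbhd c N i)))\<^sup>2)"
    by (simp add: vnorm_def sum_nonneg)
  finally have sum_D: "(\<Sum>d\<in>D. (cmod (Uop q N \<delta> d c))\<^sup>2) = (\<Prod>i\<in>S. (vnorm (\<delta> (nbhd c N i)))\<^sup>2)" .
  show ?thesis
  proof (rule has_sum_finite_neutralI[where B = D])
    show "finite D"
      using bij_betw_finite[OF bij] \<open>finite S\<close> by (simp add: finite_PiE)
    show "D \<subseteq> configs q"
      unfolding D_def configs_def using \<open>finite S\<close> by (auto intro: finite_subset)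
    show "(cmod (Uop q N \<delta> d c))\<^sup>2 = 0" if "d \<in> configs q - D" for d
      using that Uop_eq_0[of \<delta> N q S c d] dq \<open>finite S\<close> c_S by (auto simp: D_def)
  qed (use sum_D in simp)
qed

lemma column_norm_one_iff_prod_vnorm:
  fixes \<delta> :: "'s::finite list \<Rightarrow> 's \<Rightarrow> complex"
  assumes dq: "\<delta> (replicate (length N) q) = (\<lambda>x. if x = q then 1 else 0)"
    and "finite S"
    and c_S: "\<And>i. i \<notin> S \<Longrightarrow> nbhd c N i = replicate (length N) q"
  shows "column_norm_one q N \<delta> c \<longleftrightarrow> (\<Prod>i\<in>S. vnorm (\<delta> (nbhd c N i))) = 1"
proof -
  let ?P = "\<Prod>i\<in>S. vnorm (\<delta> (nbhd c N i))"
  have sum_P: "((\<lambda>d. (cmod (Uop q N \<delta> d c))\<^sup>2) has_sum ?P\<^sup>2) (configs q)"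
    using column_has_sum_prod_vnorm[of \<delta> N q S c] assms by (simp add: prod_power_distrib)
  have "column_norm_one q N \<delta> c \<longleftrightarrow> ?P\<^sup>2 = 1"
    unfolding column_norm_one_def using sum_P has_sum_unique by auto
  also have "\<dots> \<longleftrightarrow> ?P = 1"
  proof -
    have "0 \<le> ?P"
      by (simp add: prod_nonneg vnorm_nonneg)
    then show ?thesis
      by (auto simp: power2_eq_1_iff)
  qed
  finally show ?thesis .
qed

lemma sorted_wrt_less_nth_add_le:
  fixes N :: "int list"
  assumes "sorted_wrt (<) N" "i \<le> j" "j < length N"
  shows "N ! i + int (j - i) \<le> N ! j"
  using assms(2,3)
proof (induction j rule: dec_induct)
  case (step j)
  then have "N ! j < N ! Suc j"
    using sorted_wrt_nth_less[OF assms(1)] by simp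
  with step show ?case
    by (simp add: Suc_diff_le)
qed simp

lemma simple_lqca_nth:
  assumes "is_lqca q N \<delta>" "simple_lqca N" "k < length N"
  shows "N ! k = hd N + int k"
proof -
  have sorted: "sorted_wrt (<) N" and "N \<noteq> []"
    using assms(1) by (auto simp: is_lqca_def)
  then have "hd N = N ! 0" "last N = N ! (length N - 1)"
    by (simp_all add: hd_conv_nth last_conv_nth)
  moreover have "N ! 0 + int k \<le> N ! k"
    using sorted_wrt_less_nth_add_le[OF sorted, of 0 k] assms(3) by simp
  moreover have "N ! k + int (length N - 1 - k) \<le> N ! (length N - 1)"
    using sorted_wrt_less_nth_add_le[OF sorted, of k "length N - 1"] assms(3) by simp
  ultimately show ?thesis
    using assms(2,3) unfolding simple_lqca_def by linarith
qed

definition window :: "(int \<Rightarrow> 's) \<Rightarrow> int \<Rightarrow> nat \<Rightarrow> 's list" where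
  "window c j m = map (\<lambda>k. c (j + int k)) [0..<m]"

lemma length_window [simp]: "length (window c j m) = m"
  by (simp add: window_def)

lemma nth_window [simp]: "k < m \<Longrightarrow> window c j m ! k = c (j + int k)"
  by (simp add: window_def)

lemma window_Suc_Cons: "window c j (Suc m) = c j # window c (j + 1) m"
  by (rule nth_equalityI) (auto simp: nth_Cons algebra_simps split: nat.split)

lemma window_Suc_snoc: "window c j (Suc m) = window c j m @ [c (j + int m)]"
  by (simp add: window_def)

lemma window_eq_replicate: "(\<And>k. k < m \<Longrightarrow> c (j + int k) = q) \<Longrightarrow> window c j m = replicate m q"
  by (rule nth_equalityI) auto

lemma nbhd_eq_window:
  assumes "is_lqca q N \<delta>" "simple_lqca N"
  shows "nbhd c N i = window c (i + hd N) (length N)"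
  by (rule nth_equalityI) (simp_all add: nbhd_def simple_lqca_nth[OF assms] add.assoc)

lemma column_norm_one_iff_prod_windows:
  assumes lqca: "is_lqca q N \<delta>" and simple: "simple_lqca N"
    and outside: "\<And>j. j < lo + int (length N) - 1 \<or> lo + int K \<le> j \<Longrightarrow> c j = q"
  shows "column_norm_one q N \<delta> c \<longleftrightarrow> (\<Prod>t<K. vnorm (\<delta> (window c (lo + int t) (length N)))) = 1"
proof -
  let ?pos = "\<lambda>t. lo + int t - hd N"
  have quiescent: "nbhd c N i = replicate (length N) q" if "i \<notin> ?pos ` {..<K}" for i
  proof -
    have far: "i + hd N < lo \<or> lo + int K \<le> i + hd N"
    proof (rule ccontr)
      assume "\<not> ?thesis"
      then have "nat (i + hd N - lo) < K" "i = ?pos (nat (i + hd N - lo))"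
        by linarith+
      with that show False
        by blast
    qed
    have "window c (i + hd N) (length N) = replicate (length N) q"
      by (intro window_eq_replicate outside) (use far in arith)
    then show ?thesis
      by (simp add: nbhd_eq_window[OF lqca simple])
  qed
  have "inj_on ?pos {..<K}"
    by (simp add: inj_on_def)
  then have "(\<Prod>i\<in>?pos ` {..<K}. vnorm (\<delta> (nbhd c N i)))
      = (\<Prod>t<K. vnorm (\<delta> (window c (lo + int t) (length N))))"
    by (simp add: prod.reindex nbhd_eq_window[OF lqca simple])
  then show ?thesis
    using column_norm_one_iff_prod_vnorm[of \<delta> N q "?pos ` {..<K}" c]
      is_lqca_quiescent[OF lqca] quiescent by simp
qed

lemma gedge_windows:
  assumes "2 \<le> r"
  shows "gedge r (window c j (r - 1)) (window c (j + 1) (r - 1))"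
proof -
  obtain m where r: "r = Suc (Suc m)"
    using assms by (metis add_2_eq_Suc le_Suc_ex)
  have "window c j (Suc m) = c j # window c (j + 1) m"
    by (rule window_Suc_Cons)
  moreover have "window c (j + 1) (Suc m) = window c (j + 1) m @ [c (j + 1 + int m)]"
    by (rule window_Suc_snoc)
  ultimately show ?thesis
    unfolding gedge_def r by auto
qed

lemma gweight_windows:
  assumes "2 \<le> r"
  shows "gweight \<delta> (window c j (r - 1)) (window c (j + 1) (r - 1)) = vnorm (\<delta> (window c j r))"
proof -
  obtain m where r: "r = Suc (Suc m)"
    using assms by (metis add_2_eq_Suc le_Suc_ex)
  show ?thesis
    unfolding gweight_def r by (simp add: window_Suc_Cons)
qed

lemma gpath_windows:
  assumes "2 \<le> r"
  shows "gpath r (map (\<lambda>t. window c (lo + int t) (r - 1)) [0..<Suc K])"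
  unfolding gpath_def gvert_def
proof (intro conjI allI impI)
  fix t
  assume "Suc t < length (map (\<lambda>t. window c (lo + int t) (r - 1)) [0..<Suc K])"
  then show "gedge r (map (\<lambda>t. window c (lo + int t) (r - 1)) [0..<Suc K] ! t)
      (map (\<lambda>t. window c (lo + int t) (r - 1)) [0..<Suc K] ! Suc t)"
    using gedge_windows[OF assms, of c "lo + int t"] by (simp add: ac_simps del: upt_Suc)
qed auto

lemma path_weight_windows:
  assumes "2 \<le> r"
  shows "path_weight \<delta> (map (\<lambda>t. window c (lo + int t) (r - 1)) [0..<Suc K])
    = (\<Prod>t<K. vnorm (\<delta> (window c (lo + int t) r)))"
  unfolding path_weight_def
proof (rule prod.cong)
  fix t
  assume "t \<in> {..<K}"
  then show "gweight \<delta> (map (\<lambda>t. window c (lo + int t) (r - 1)) [0..<Suc K] ! t)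
      (map (\<lambda>t. window c (lo + int t) (r - 1)) [0..<Suc K] ! Suc t)
    = vnorm (\<delta> (window c (lo + int t) r))"
    using gweight_windows[OF assms, of \<delta> c "lo + int t"] by (simp add: ac_simps del: upt_Suc)
qed simp

text \<open>A path starting at the quiescent vertex is the window sequence of the configuration that
  spells out the last letters of its vertices from position 0 on.\<close>

definition path_config :: "'s \<Rightarrow> 's list list \<Rightarrow> int \<Rightarrow> 's" where
  "path_config q vs j = (if 0 \<le> j \<and> j < int (length vs) - 1 then last (vs ! Suc (nat j)) else q)"

lemma path_config_in_configs: "path_config q vs \<in> configs q"
proof -
  have "{j. path_config q vs j \<noteq> q} \<subseteq> {0..<int (length vs) - 1}"
    by (auto simp: path_config_def split: if_splits)
  then have "finite {j. path_config q vs j \<noteq> q}"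
    by (rule finite_subset) simp
  then show ?thesis
    by (simp add: configs_def)
qed

lemma gpath_nth_eq_window_path_config:
  assumes "gpath r vs" "2 \<le> r" "hd vs = replicate (r - 1) q" "t < length vs"
  shows "vs ! t = window (path_config q vs) (1 - int r + int t) (r - 1)"
  using assms(4)
proof (induction t)
  case 0
  have "window (path_config q vs) (1 - int r) (r - 1) = replicate (r - 1) q"
    by (rule window_eq_replicate) (auto simp: path_config_def)
  with 0 assms(3) show ?case
    by (simp add: hd_conv_nth)
next
  case (Suc t)
  let ?c = "path_config q vs"
  have r: "r - 1 = Suc (r - 2)"
    using assms(2) by simp
  obtain x y z where z: "vs ! t = x # z" "vs ! Suc t = z @ [y]"
    using assms(1) Suc.prems unfolding gpath_def gedge_def by blast
  have "x # z = ?c (1 - int r + int t) # window ?c (1 - int r + int (Suc t)) (r - 2)"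
    using Suc z r by (simp add: window_Suc_Cons add.assoc)
  moreover have "y = ?c (1 - int r + int (Suc t) + int (r - 2))"
    using z Suc.prems assms(2) by (simp add: path_config_def of_nat_diff)
  ultimately show ?case
    using z r by (simp add: window_Suc_snoc)
qed

lemma q_cycle_path_config_outside:
  assumes cyc: "q_cycle q r vs" and "2 \<le> r" and j: "j < 0 \<or> int (length vs) - int r \<le> j"
  shows "path_config q vs j = q"
proof (cases "0 \<le> j \<and> j < int (length vs) - 1")
  case True
  define K where "K = length vs - 1"
  have "vs ! K = last vs"
    using cyc unfolding q_cycle_def gpath_def K_def by (simp add: last_conv_nth)
  also have "\<dots> = replicate (r - 1) q"
    using cyc unfolding q_cycle_def by metis
  finally have "vs ! K = replicate (r - 1) q" .
  moreover have "vs ! K = window (path_config q vs) (1 - int r + int K) (r - 1)"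
    using cyc \<open>2 \<le> r\<close> unfolding q_cycle_def K_def
    by (intro gpath_nth_eq_window_path_config) auto
  moreover have "j = 1 - int r + int K + int (nat (j - (1 - int r + int K)))"
    "nat (j - (1 - int r + int K)) < r - 1"
    using True j unfolding K_def by linarith+
  ultimately show ?thesis
    by (metis nth_replicate nth_window)
qed (auto simp: path_config_def)

lemma q_cycle_weight_one_if_column_norm_one:
  assumes lqca: "is_lqca q N \<delta>" and simple: "simple_lqca N" and "2 \<le> length N"
    and cyc: "q_cycle q (length N) vs"
    and column: "column_norm_one q N \<delta> (path_config q vs)"
  shows "path_weight \<delta> vs = 1"
proof -
  define r c K where "r = length N" and "c = path_config q vs" and "K = length vs - 1"
  have "2 \<le> r" "length vs = Suc K"
    using assms(3) cyc unfolding r_def K_def q_cycle_def by auto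
  have windows: "vs = map (\<lambda>t. window c (1 - int r + int t) (r - 1)) [0..<Suc K]"
    using cyc gpath_nth_eq_window_path_config[of r vs q] \<open>2 \<le> r\<close> \<open>length vs = Suc K\<close>
    unfolding q_cycle_def r_def c_def by (intro nth_equalityI) (auto simp del: upt_Suc)
  have "c j = q" if "j < 1 - int r + int r - 1 \<or> 1 - int r + int K \<le> j" for j
    using q_cycle_path_config_outside[OF cyc[folded r_def] \<open>2 \<le> r\<close>, of j] that
      \<open>length vs = Suc K\<close> unfolding c_def by linarith
  then have "(\<Prod>t<K. vnorm (\<delta> (window c (1 - int r + int t) r))) = 1"
    using column column_norm_one_iff_prod_windows[OF lqca simple, of "1 - int r" K c]
    unfolding r_def c_def by blast
  moreover have "path_weight \<delta> vs = (\<Prod>t<K. vnorm (\<delta> (window c (1 - int r + int t) r)))"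
    by (subst windows) (rule path_weight_windows[OF \<open>2 \<le> r\<close>])
  ultimately show ?thesis
    by simp
qed

lemma column_norm_one_if_q_cycles_weight_one:
  assumes lqca: "is_lqca q N \<delta>" and simple: "simple_lqca N" and "2 \<le> length N"
    and "c \<in> configs q"
    and cycles: "\<And>vs. q_cycle q (length N) vs \<Longrightarrow> path_weight \<delta> vs = 1"
  shows "column_norm_one q N \<delta> c"
proof -
  define r where "r = length N"
  obtain M :: nat where M: "\<And>j. c j \<noteq> q \<Longrightarrow> \<bar>j\<bar> \<le> int M"
  proof -
    obtain k where "abs ` {j. c j \<noteq> q} \<subseteq> {..k}"
      using \<open>c \<in> configs q\<close> finite_int_iff_bounded_le unfolding configs_def by blast
    then show thesis
      by (intro that[of "nat k"]) force
  qed
  define lo K where "lo = 1 - int M - int r" and "K = 2 * M + r"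
  have outside: "c j = q" if "j < lo + int r - 1 \<or> lo + int K \<le> j" for j
    using M[of j] that unfolding lo_def K_def by (cases "c j = q") auto
  define vs where "vs = map (\<lambda>t. window c (lo + int t) (r - 1)) [0..<Suc K]"
  have "2 \<le> r" "2 \<le> K"
    using assms(3) unfolding r_def K_def by simp_all
  have "hd vs = window c lo (r - 1)"
    by (simp add: vs_def upt_conv_Cons del: upt_Suc)
  also have "\<dots> = replicate (r - 1) q"
    by (intro window_eq_replicate outside) arith
  finally have "hd vs = replicate (r - 1) q" .
  have "last vs = window c (lo + int K) (r - 1)"
    by (simp add: vs_def last_map del: upt_Suc)
  also have "\<dots> = replicate (r - 1) q"
    by (intro window_eq_replicate outside) arith
  finally have "last vs = replicate (r - 1) q" .
  moreover have "gpath r vs"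
    unfolding vs_def by (rule gpath_windows[OF \<open>2 \<le> r\<close>])
  moreover have "length vs = Suc K"
    by (simp add: vs_def)
  ultimately have "q_cycle q r vs"
    using \<open>hd vs = replicate (r - 1) q\<close> \<open>2 \<le> K\<close> by (simp add: q_cycle_def)
  then have "(\<Prod>t<K. vnorm (\<delta> (window c (lo + int t) r))) = 1"
    using cycles path_weight_windows[OF \<open>2 \<le> r\<close>] unfolding vs_def r_def by metis
  then show ?thesis
    using column_norm_one_iff_prod_windows[OF lqca simple, of lo K c] outside
    unfolding r_def by blast
qed

theorem lemma4:
  fixes q :: "'s::finite" and N :: "int list" and \<delta> :: "'s list \<Rightarrow> 's \<Rightarrow> complex"
  assumes "is_lqca q N \<delta>" and "simple_lqca N" and "length N \<ge> 2"
  shows "(\<forall>c\<in>configs q. column_norm_one q N \<delta> c) \<longleftrightarrow>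
         (\<forall>vs. q_cycle q (length N) vs \<longrightarrow> path_weight \<delta> vs = 1)"
proof
  assume columns: "\<forall>c\<in>configs q. column_norm_one q N \<delta> c"
  show "\<forall>vs. q_cycle q (length N) vs \<longrightarrow> path_weight \<delta> vs = 1"
  proof (intro allI impI)
    fix vs
    assume "q_cycle q (length N) vs"
    moreover have "column_norm_one q N \<delta> (path_config q vs)"
      using columns path_config_in_configs by (rule bspec)
    ultimately show "path_weight \<delta> vs = 1"
      by (rule q_cycle_weight_one_if_column_norm_one[OF assms])
  qed
next
  assume "\<forall>vs. q_cycle q (length N) vs \<longrightarrow> path_weight \<delta> vs = 1"
  then show "\<forall>c\<in>configs q. column_norm_one q N \<delta> c"
    using column_norm_one_if_q_cycles_weight_one[OF assms] by blast
qed

end
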